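(* Let $n\ge 3$. The cycle $C_n$ admits an $(a,d)$-distance antimagic labeling for some integers $a$ and $d\ge 0$ if and only if either $d=0$ and $n=4$, or $d=1$ and $n$ is odd.
   Context: For a finite simple graph $G=(V,E)$ with $v=|V|$ vertices and a bijection $f:V\to\{1,\dots,v\}$, the vertex-weight of $x$ is $w(x)=\sum_{y\in N(x)} f(y)$, where $N(x)$ is the set of neighbours of $x$. For integers $a$ and $d\ge 0$, $f$ is an $(a,d)$-distance antimagic labeling if the multiset of vertex-weights equals $\{a,a+d,\dots,a+(v-1)d\}$. *)

theory Defs
  imports Main "HOL-Library.Multiset"
begin

definition nbhd :: "'a set \<Rightarrow> ('a \<Rightarrow> 'a \<Rightarrow> bool) \<Rightarrow> 'a \<Rightarrow> 'a set" where
  "nbhd V E x = {y \<in> V. E x y}"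

definition vertex_weight :: "'a set \<Rightarrow> ('a \<Rightarrow> 'a \<Rightarrow> bool) \<Rightarrow> ('a \<Rightarrow> nat) \<Rightarrow> 'a \<Rightarrow> int" where
  "vertex_weight V E f x = (\<Sum>y\<in>nbhd V E x. int (f y))"

definition distance_antimagic :: "'a set \<Rightarrow> ('a \<Rightarrow> 'a \<Rightarrow> bool) \<Rightarrow> ('a \<Rightarrow> nat) \<Rightarrow> int \<Rightarrow> int \<Rightarrow> bool" where
  "distance_antimagic V E f a d \<longleftrightarrow>
     bij_betw f V {1..card V} \<and>
     image_mset (vertex_weight V E f) (mset_set V) =
       mset (map (\<lambda>i. a + int i * d) [0..<card V])"

definition cycle_adj :: "nat \<Rightarrow> nat \<Rightarrow> nat \<Rightarrow> bool" where
  "cycle_adj n i j \<longleftrightarrow> i \<noteq> j \<and> (j = (i + 1) mod n \<or> i = (j + 1) mod n)"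

end

theory Submission
  imports Defs "HOL-Library.FuncSet"
begin

text \<open>A vertex weight of a labelled cycle is the sum of two distinct labels, hence lies in
  [3, 2n - 1], which forces d \<le> 1. Summing the weights counts every label twice, so
  2(n + 1) = 2a + d(n - 1), and for d = 1 the cycle is odd. For d = 0 the vertices 1 and n - 1
  share the neighbour 0, so equal weights force the labels of 2 and n - 2 to coincide: n = 4.
  Conversely, the zigzag sequence 1, m + 2, 2, m + 3, ..., m + 1 has cyclically consecutive sums
  m + 2, ..., 3m + 2; laid along C_{2m+1} with step two, i.e. by multiplying with the inverse
  m + 1 of 2 modulo 2m + 1, its weights are exactly these sums. C_4 is labelled 1, 2, 4, 3.\<close>

definition cycle_prev :: "nat \<Rightarrow> nat \<Rightarrow> nat" where
  "cycle_prev n i = (i + n - 1) mod n"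

definition cycle_next :: "nat \<Rightarrow> nat \<Rightarrow> nat" where
  "cycle_next n i = (i + 1) mod n"

lemma cycle_prev_eq: "i < n \<Longrightarrow> cycle_prev n i = (if i = 0 then n - 1 else i - 1)"
  by (auto simp: cycle_prev_def mod_if)

lemma cycle_next_eq: "i < n \<Longrightarrow> cycle_next n i = (if i = n - 1 then 0 else i + 1)"
  by (auto simp: cycle_next_def mod_if)

lemma cycle_prev_less: "0 < n \<Longrightarrow> cycle_prev n i < n"
  by (simp add: cycle_prev_def)

lemma cycle_next_less: "0 < n \<Longrightarrow> cycle_next n i < n"
  by (simp add: cycle_next_def)

lemma cycle_prev_next: "i < n \<Longrightarrow> cycle_prev n (cycle_next n i) = i"
  by (simp add: cycle_prev_eq cycle_next_eq)

lemma cycle_next_prev: "i < n \<Longrightarrow> cycle_next n (cycle_prev n i) = i"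
  by (auto simp: cycle_prev_eq cycle_next_eq)

lemma bij_betw_cycle_prev: "0 < n \<Longrightarrow> bij_betw (cycle_prev n) {0..<n} {0..<n}"
  by (rule bij_betwI[where g = "cycle_next n"])
     (auto simp: cycle_prev_less cycle_next_less cycle_prev_next cycle_next_prev)

lemma bij_betw_cycle_next: "0 < n \<Longrightarrow> bij_betw (cycle_next n) {0..<n} {0..<n}"
  by (rule bij_betwI[where g = "cycle_prev n"])
     (auto simp: cycle_prev_less cycle_next_less cycle_prev_next cycle_next_prev)

lemma nbhd_cycle_adj:
  assumes "3 \<le> n" "i < n"
  shows "nbhd {0..<n} (cycle_adj n) i = {cycle_prev n i, cycle_next n i}"
proof -
  have "cycle_adj n i j \<longleftrightarrow> j = cycle_prev n i \<or> j = cycle_next n i" if "j < n" for j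
    using assms that by (auto simp: cycle_adj_def cycle_prev_eq cycle_next_def mod_if)
  then show ?thesis
    using assms by (auto simp: nbhd_def cycle_prev_less cycle_next_less)
qed

lemma vertex_weight_cycle_adj:
  assumes "3 \<le> n" "i < n"
  shows "vertex_weight {0..<n} (cycle_adj n) f i = int (f (cycle_prev n i)) + int (f (cycle_next n i))"
proof -
  have "cycle_prev n i \<noteq> cycle_next n i"
    using assms by (auto simp: cycle_prev_eq cycle_next_eq)
  then show ?thesis
    by (simp add: vertex_weight_def nbhd_cycle_adj[OF assms])
qed

lemma image_mset_mset_set_reindex:
  assumes "bij_betw \<sigma> A A" "\<And>x. x \<in> A \<Longrightarrow> g x = h (\<sigma> x)"
  shows "image_mset g (mset_set A) = image_mset h (mset_set A)"
proof -
  have "image_mset g (mset_set A) = image_mset h (image_mset \<sigma> (mset_set A))"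
    using assms(2) by (cases "finite A") (auto simp: multiset.map_comp intro!: image_mset_cong)
  also have "image_mset \<sigma> (mset_set A) = mset_set A"
    using assms(1) by (simp add: image_mset_mset_set bij_betw_def)
  finally show ?thesis .
qed

lemma sum_vertex_weight_cycle_adj:
  assumes "3 \<le> n"
  shows "(\<Sum>i<n. vertex_weight {0..<n} (cycle_adj n) f i) = 2 * (\<Sum>i<n. int (f i))"
proof -
  have "0 < n" using assms by simp
  have "(\<Sum>i<n. vertex_weight {0..<n} (cycle_adj n) f i)
      = (\<Sum>i<n. int (f (cycle_prev n i))) + (\<Sum>i<n. int (f (cycle_next n i)))"
    using assms by (simp add: vertex_weight_cycle_adj sum.distrib)
  also have "\<dots> = 2 * (\<Sum>i<n. int (f i))"
    using sum.reindex_bij_betw[OF bij_betw_cycle_prev[OF \<open>0 < n\<close>], of "\<lambda>i. int (f i)"]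
          sum.reindex_bij_betw[OF bij_betw_cycle_next[OF \<open>0 < n\<close>], of "\<lambda>i. int (f i)"]
    by (simp add: atLeast0LessThan)
  finally show ?thesis .
qed

lemma vertex_weight_cycle_adj_bounds:
  assumes "3 \<le> n" "bij_betw f {0..<n} {1..n}" "i < n"
  shows "3 \<le> vertex_weight {0..<n} (cycle_adj n) f i"
    and "vertex_weight {0..<n} (cycle_adj n) f i \<le> 2 * int n - 1"
proof -
  let ?p = "cycle_prev n i" and ?q = "cycle_next n i"
  have "?p < n" "?q < n" "?p \<noteq> ?q"
    using assms(1,3) by (auto simp: cycle_prev_eq cycle_next_eq)
  then have "f ?p \<in> {1..n}" "f ?q \<in> {1..n}" "f ?p \<noteq> f ?q"
    using bij_betw_apply[OF assms(2)] bij_betw_imp_inj_on[OF assms(2)]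
    by (auto dest: inj_onD)
  moreover have "vertex_weight {0..<n} (cycle_adj n) f i = int (f ?p) + int (f ?q)"
    using assms(1,3) by (rule vertex_weight_cycle_adj)
  ultimately show "3 \<le> vertex_weight {0..<n} (cycle_adj n) f i"
       and "vertex_weight {0..<n} (cycle_adj n) f i \<le> 2 * int n - 1"
    by auto
qed

lemma distance_antimagic_cycle_adj_weights:
  assumes "distance_antimagic {0..<n} (cycle_adj n) f a d"
  shows "vertex_weight {0..<n} (cycle_adj n) f ` {0..<n} = (\<lambda>i. a + int i * d) ` {0..<n}"
    and "(\<Sum>i<n. vertex_weight {0..<n} (cycle_adj n) f i) = (\<Sum>i<n. a + int i * d)"
proof -
  have eq: "image_mset (vertex_weight {0..<n} (cycle_adj n) f) (mset_set {0..<n})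
          = image_mset (\<lambda>i. a + int i * d) (mset_set {0..<n})"
    using assms by (simp add: distance_antimagic_def mset_map)
  show "vertex_weight {0..<n} (cycle_adj n) f ` {0..<n} = (\<lambda>i. a + int i * d) ` {0..<n}"
    using arg_cong[OF eq, of set_mset] by simp
  show "(\<Sum>i<n. vertex_weight {0..<n} (cycle_adj n) f i) = (\<Sum>i<n. a + int i * d)"
    using arg_cong[OF eq, of sum_mset] by (simp add: sum_unfold_sum_mset atLeast0LessThan)
qed

lemma distance_antimagic_cycle_adj_diff_le_1:
  assumes "3 \<le> n" "d \<ge> 0" "distance_antimagic {0..<n} (cycle_adj n) f a d"
  shows "d \<le> 1"
proof -
  let ?w = "vertex_weight {0..<n} (cycle_adj n) f"
  have bij: "bij_betw f {0..<n} {1..n}"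
    using assms(3) by (simp add: distance_antimagic_def)
  have "a + int i * d \<in> ?w ` {0..<n}" if "i < n" for i
    unfolding distance_antimagic_cycle_adj_weights(1)[OF assms(3)] using that by auto
  from this[of 0] this[of "n - 1"]
  have "a \<in> ?w ` {0..<n}" "a + int (n - 1) * d \<in> ?w ` {0..<n}"
    using assms(1) by simp_all
  then have "3 \<le> a" "a + int (n - 1) * d \<le> 2 * int n - 1"
    using vertex_weight_cycle_adj_bounds[OF assms(1) bij] by fastforce+
  then have "int (n - 1) * d < int (n - 1) * 2"
    using assms(1) by simp
  then show ?thesis
    using mult_less_cancel_left_pos[of "int (n - 1)" d 2] assms(1) by simp
qed

lemma distance_antimagic_cycle_adj_sum:
  assumes "3 \<le> n" "distance_antimagic {0..<n} (cycle_adj n) f a d"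
  shows "2 * (int n + 1) = 2 * a + d * (int n - 1)"
proof -
  obtain k where n: "n = Suc k"
    using assms(1) not0_implies_Suc by fastforce
  have bij: "bij_betw f {0..<n} {1..n}"
    using assms(2) by (simp add: distance_antimagic_def)
  have "2 * (\<Sum>i<n. a + int i * d) = 2 * (\<Sum>i<n. vertex_weight {0..<n} (cycle_adj n) f i)"
    using distance_antimagic_cycle_adj_weights(2)[OF assms(2)] by simp
  also have "\<dots> = 2 * (2 * (\<Sum>k\<in>{1..n}. int k))"
    using sum_vertex_weight_cycle_adj[OF assms(1), of f] sum.reindex_bij_betw[OF bij, of int]
    by (simp add: lessThan_atLeast0)
  also have "\<dots> = 2 * (int n * (int n + 1))"
    using double_gauss_sum_from_Suc_0[of n, where ?'a = int] by simp
  finally have "2 * (\<Sum>i = 0..k. a + int i * d) = 2 * (int n * (int n + 1))"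
    by (simp add: n atMost_atLeast0 lessThan_Suc_atMost)
  then have "int n * (2 * a + int k * d) = int n * (2 * (int n + 1))"
    using double_arith_series[of a d k] by (simp add: n algebra_simps)
  then have "2 * a + int k * d = 2 * (int n + 1)"
    using assms(1) by (subst (asm) mult_left_cancel) auto
  then show ?thesis
    by (simp add: n algebra_simps)
qed

lemma distance_antimagic_cycle_adj_diff_0:
  assumes "3 \<le> n" "distance_antimagic {0..<n} (cycle_adj n) f a 0"
  shows "n = 4"
proof -
  let ?w = "vertex_weight {0..<n} (cycle_adj n) f"
  have "?w i \<in> (\<lambda>i. a + int i * 0) ` {0..<n}" if "i < n" for i
    unfolding distance_antimagic_cycle_adj_weights(1)[OF assms(2), symmetric] using that by simp
  then have "?w i = a" if "i < n" for i
    using that by auto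
  then have "?w 1 = ?w (n - 1)"
    using assms(1) by simp
  then have "f 2 = f (n - 2)"
    using assms(1)
    by (simp add: vertex_weight_cycle_adj cycle_prev_eq cycle_next_eq numeral_2_eq_2
        split: if_split_asm)
  moreover have "inj_on f {0..<n}"
    using assms(2) by (simp add: distance_antimagic_def bij_betw_def)
  ultimately have "2 = n - 2"
    using assms(1) by (auto dest: inj_onD)
  then show ?thesis by simp
qed

lemma distance_antimagic_cycle_adj_necessary:
  assumes "3 \<le> n" "d \<ge> 0" "distance_antimagic {0..<n} (cycle_adj n) f a d"
  shows "(d = 0 \<and> n = 4) \<or> (d = 1 \<and> odd n)"
proof -
  consider "d = 0" | "d = 1"
    using distance_antimagic_cycle_adj_diff_le_1[OF assms] assms(2) by linarith
  then show ?thesis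
  proof cases
    case 1
    then show ?thesis
      using distance_antimagic_cycle_adj_diff_0 assms(1,3) by blast
  next
    case 2
    then have "int n = 2 * a - 3"
      using distance_antimagic_cycle_adj_sum[OF assms(1,3)] by simp
    then have "odd (int n)" by presburger
    with 2 show ?thesis by simp
  qed
qed

definition zigzag :: "nat \<Rightarrow> nat \<Rightarrow> nat" where
  "zigzag m k = (if even k then k div 2 + 1 else m + 1 + (k + 1) div 2)"

lemma zigzag_add_cycle_next:
  assumes "k < 2 * m + 1"
  shows "zigzag m k + zigzag m (cycle_next (2 * m + 1) k) = m + 2 + cycle_next (2 * m + 1) k"
proof (cases "k = 2 * m")
  case True
  then show ?thesis by (simp add: zigzag_def cycle_next_def)
next
  case False
  then have "cycle_next (2 * m + 1) k = k + 1"
    using assms by (simp add: cycle_next_eq)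
  then show ?thesis
    by (auto simp: zigzag_def elim!: evenE oddE)
qed

lemma bij_betw_zigzag: "bij_betw (zigzag m) {0..<2 * m + 1} {1..2 * m + 1}"
proof -
  have inj: "inj_on (zigzag m) {0..<2 * m + 1}"
    unfolding inj_on_def zigzag_def by (auto split: if_splits elim!: evenE oddE)
  moreover have "zigzag m ` {0..<2 * m + 1} \<subseteq> {1..2 * m + 1}"
    unfolding zigzag_def by (auto elim!: evenE oddE)
  moreover have "card (zigzag m ` {0..<2 * m + 1}) = card {1..2 * m + 1}"
    using inj by (simp add: card_image)
  ultimately show ?thesis
    by (simp add: bij_betw_def card_subset_eq)
qed

lemma bij_betw_mult_mod:
  fixes a b n :: nat
  assumes "0 < n" "a * b mod n = 1 mod n"
  shows "bij_betw (\<lambda>x. a * x mod n) {0..<n} {0..<n}"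
proof -
  have inverse: "v * (u * x mod n) mod n = x" if "u * v mod n = 1 mod n" "x < n" for u v x
  proof -
    have "v * (u * x mod n) mod n = (u * v) * x mod n"
      by (simp add: mod_mult_right_eq ac_simps)
    also have "\<dots> = (u * v mod n) * x mod n"
      by (simp add: mod_mult_left_eq)
    also have "\<dots> = x"
      using that by (metis mod_less mod_mult_left_eq mult_1)
    finally show ?thesis .
  qed
  show ?thesis
    by (rule bij_betwI[where g = "\<lambda>x. b * x mod n"])
       (use assms inverse[of a b] inverse[of b a] in \<open>auto simp: mult.commute\<close>)
qed

lemma mult_half_cycle_next:
  assumes "0 < n" "2 * c mod n = 1 mod n"
  shows "c * cycle_next n i mod n = cycle_next n (c * cycle_prev n i mod n)"
proof -
  have "cycle_next n (c * cycle_prev n i mod n) = (c * (i + n - 1) + 1) mod n"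
    by (simp add: cycle_next_def cycle_prev_def mod_mult_right_eq mod_Suc_eq)
  also have "\<dots> = (c * (i + n - 1) + 2 * c) mod n"
    using assms(2) by (metis mod_add_right_eq)
  also have "\<dots> = (c * (i + 1) + c * n) mod n"
    using assms(1) by (cases n) (simp_all add: algebra_simps mult_2_right)
  also have "\<dots> = c * cycle_next n i mod n"
    by (simp add: cycle_next_def mod_mult_right_eq)
  finally show ?thesis ..
qed

lemma distance_antimagic_odd_cycle:
  assumes "1 \<le> m"
  defines "n \<equiv> 2 * m + 1"
  shows "distance_antimagic {0..<n} (cycle_adj n) (\<lambda>j. zigzag m ((m + 1) * j mod n)) (int m + 2) 1"
proof -
  let ?h = "\<lambda>j. (m + 1) * j mod n"
  let ?f = "\<lambda>j. zigzag m (?h j)"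
  have "3 \<le> n" "0 < n" using assms by simp_all
  have "2 * (m + 1) = n + 1" by (simp add: n_def)
  then have half: "2 * (m + 1) mod n = 1 mod n" "(m + 1) * 2 mod n = 1 mod n"
    by (metis mod_add_self1 add.commute mult.commute)+
  have bij_h: "bij_betw ?h {0..<n} {0..<n}"
    using bij_betw_mult_mod[OF \<open>0 < n\<close> half(2)] .
  have bij_f: "bij_betw ?f {0..<n} {1..n}"
    using bij_betw_trans[OF bij_h bij_betw_zigzag[of m, folded n_def]] by (simp add: comp_def)
  have bij_\<sigma>: "bij_betw (\<lambda>i. ?h (cycle_next n i)) {0..<n} {0..<n}"
    using bij_betw_trans[OF bij_betw_cycle_next[OF \<open>0 < n\<close>] bij_h] by (simp add: comp_def)
  have weight: "vertex_weight {0..<n} (cycle_adj n) ?f i = int m + 2 + int (?h (cycle_next n i)) * 1"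
    if "i \<in> {0..<n}" for i
  proof -
    define k where "k = ?h (cycle_prev n i)"
    have "k < n" using \<open>0 < n\<close> by (simp add: k_def)
    have next_eq: "?h (cycle_next n i) = cycle_next n k"
      unfolding k_def by (rule mult_half_cycle_next[OF \<open>0 < n\<close> half(1)])
    have "vertex_weight {0..<n} (cycle_adj n) ?f i = int (?f (cycle_prev n i)) + int (?f (cycle_next n i))"
      using that by (simp add: vertex_weight_cycle_adj[OF \<open>3 \<le> n\<close>])
    also have "\<dots> = int (zigzag m k + zigzag m (cycle_next n k))"
      by (simp only: k_def next_eq of_nat_add)
    also have "\<dots> = int m + 2 + int (cycle_next n k) * 1"
      using zigzag_add_cycle_next[of k m, folded n_def] \<open>k < n\<close> by simp
    also have "\<dots> = int m + 2 + int (?h (cycle_next n i)) * 1"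
      by (simp only: next_eq)
    finally show ?thesis .
  qed
  show ?thesis
    unfolding distance_antimagic_def mset_map mset_upt card_atLeastLessThan diff_zero
    using bij_f image_mset_mset_set_reindex[where h = "\<lambda>i. int m + 2 + int i * 1", OF bij_\<sigma> weight]
    by simp
qed

lemma distance_antimagic_cycle_4: "distance_antimagic {0..<4} (cycle_adj 4) ((!) [1, 2, 4, 3]) 5 0"
proof -
  have weight: "vertex_weight {0..<4} (cycle_adj 4) ((!) [1, 2, 4, 3]) i = 5 + int (id i) * 0"
    if "i \<in> {0..<4}" for i
  proof -
    have "i = 0 \<or> i = 1 \<or> i = 2 \<or> i = 3" using that by auto
    then show ?thesis by (auto simp: vertex_weight_cycle_adj cycle_prev_eq cycle_next_eq)
  qed
  have "{0..<4::nat} = {0, 1, 2, 3}" "{1..4::nat} = {1, 2, 3, 4}" by auto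
  then have "bij_betw ((!) [1::nat, 2, 4, 3]) {0..<4} {1..4}"
    by (simp add: bij_betw_def inj_on_def insert_commute)
  then show ?thesis
    unfolding distance_antimagic_def mset_map mset_upt
    using image_mset_mset_set_reindex[where A = "{0..<4}" and h = "\<lambda>i. 5 + int i * 0", OF bij_betw_id weight]
    by simp
qed

theorem theorem5:
  fixes n :: nat and d :: int
  assumes "n \<ge> 3" and "d \<ge> 0"
  shows "(\<exists>f a. distance_antimagic {0..<n} (cycle_adj n) f a d) \<longleftrightarrow>
         ((d = 0 \<and> n = 4) \<or> (d = 1 \<and> odd n))"
proof
  assume "\<exists>f a. distance_antimagic {0..<n} (cycle_adj n) f a d"
  then show "(d = 0 \<and> n = 4) \<or> (d = 1 \<and> odd n)"
    using distance_antimagic_cycle_adj_necessary assms by blast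
next
  assume "(d = 0 \<and> n = 4) \<or> (d = 1 \<and> odd n)"
  then show "\<exists>f a. distance_antimagic {0..<n} (cycle_adj n) f a d"
  proof
    assume "d = 0 \<and> n = 4"
    then show ?thesis using distance_antimagic_cycle_4 by blast
  next
    assume odd: "d = 1 \<and> odd n"
    then obtain m where n: "n = 2 * m + 1"
      by (auto elim: oddE)
    with assms(1) have "1 \<le> m" by simp
    then show ?thesis
      using distance_antimagic_odd_cycle[of m] n odd by auto
  qed
qed

end
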